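(* Let $P(x)=x^\alpha=x_1^{\alpha_1}\cdots x_d^{\alpha_d}$ for $\alpha=(\alpha_1,\dots,\alpha_d)\in\mathbb{N}_0^d$ with $\|\alpha\|_1=k\ge2$. For any $W,L\in\mathbb{N}$ there exists a ReLU network $\phi:\mathbb{R}^d\to\mathbb{R}$, $\phi\in\mathcal{NN}(9W+k-1,(k-1)(L+1))$, such that for all $x,y\in[-1,1]^d$, $\phi(x)\in[-1,1]$ and $$|\phi(x)-P(x)|\le6(k-1)W^{-L},\qquad|\phi(x)-\phi(y)|\le7^{k-1}\|\alpha\|_\infty\|x-y\|_1.$$
   Context: $\sigma(x)=\max(x,0)$. $\mathcal{NN}(W,L)$: functions $\phi(x)=T_L(\sigma(T_{L-1}(\cdots\sigma(T_0(x))\cdots)))$ with affine maps $T_l$, ReLU componentwise, all hidden layer sizes $\le W$ and depth $\le L$. $\|\alpha\|_1=\sum_i\alpha_i$, $\|\alpha\|_\infty=\max_i\alpha_i$. *)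

theory Defs
  imports Complex_Main
begin

text \<open>Vectors in R^n are represented as functions nat => real, of which only the
  components with index < n are used.\<close>

definition relu :: "real \<Rightarrow> real" where
  "relu x = max x 0"

definition affine_map :: "(nat \<Rightarrow> nat \<Rightarrow> real) \<Rightarrow> (nat \<Rightarrow> real) \<Rightarrow> nat \<Rightarrow> (nat \<Rightarrow> real) \<Rightarrow> (nat \<Rightarrow> real)" where
  "affine_map A b n x = (\<lambda>i. (\<Sum>j<n. A i j * x j) + b i)"

text \<open>A layer is (A, b, n) where n is its input dimension. The list
  [T_0, ..., T_L] is evaluated as T_L (sigma (T_{L-1} ( ... sigma (T_0 x)))).\<close>

type_synonym layer = "(nat \<Rightarrow> nat \<Rightarrow> real) \<times> (nat \<Rightarrow> real) \<times> nat"

fun eval_layers :: "layer list \<Rightarrow> (nat \<Rightarrow> real) \<Rightarrow> (nat \<Rightarrow> real)" where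
  "eval_layers [] x = x"
| "eval_layers [(A, b, n)] x = affine_map A b n x"
| "eval_layers ((A, b, n) # T # Ts) x = eval_layers (T # Ts) (\<lambda>i. relu (affine_map A b n x i))"

text \<open>NN d W L: realizations R^d -> R of ReLU networks with input dimension d,
  output dimension 1 (component 0 of the last affine map), all hidden layer sizes
  (= input dimensions of T_1, ..., T_L) at most W and depth (number of hidden
  layers) at most L.\<close>

definition NN :: "nat \<Rightarrow> nat \<Rightarrow> nat \<Rightarrow> ((nat \<Rightarrow> real) \<Rightarrow> real) set" where
  "NN d W L = {\<phi>. \<exists>Ts. Ts \<noteq> [] \<and> length Ts \<le> L + 1 \<and>
      snd (snd (hd Ts)) = d \<and>
      (\<forall>T\<in>set (tl Ts). snd (snd T) \<le> W) \<and>
      (\<forall>x. \<phi> x = eval_layers Ts x 0)}"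

end

theory Submission
  imports Defs
begin

text \<open>Yarotsky's construction. With the sawtooth \<open>s\<close> and the piecewise
  linear interpolant \<open>Q\<close> of \<open>y\<^sup>2\<close> at the integers one has
  \<open>Q (n y) = n\<^sup>2 (Q y - s y) + Q (n s y)\<close> and \<open>s (n s y) = s (n y)\<close>, and on \<open>[0, n]\<close> both \<open>s\<close>
  and \<open>Q\<close> are sums of \<open>n\<close> shifted ReLUs. Hence \<open>L\<close> layers of width \<open>n + 1\<close> compute the
  interpolant of \<open>w\<^sup>2\<close> on the grid \<open>\<int> / n\<^sup>L\<close>, with error at most \<open>1 / (4 n\<^sup>2\<^sup>L)\<close> and
  Lipschitz constant 3 on \<open>[0, 1]\<close>. The identities \<open>t\<^sup>2 = 4 ((t + 1) / 2)\<^sup>2 - 2 t - 1\<close> and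
  \<open>a b = ((a + b) / 2)\<^sup>2 - ((a - b) / 2)\<^sup>2\<close> turn this into an approximate product on \<open>[-1, 1]\<close>
  with values in \<open>[-1, 1]\<close>, error \<open>2 / n\<^sup>2\<^sup>L\<close> and Lipschitz constant 4 in each argument.
  Writing \<open>x\<^sup>\<alpha>\<close> as a product of \<open>k\<close> coordinates, \<open>k - 1\<close> such multiplications in sequence
  (carrying the unused coordinates along as \<open>relu (t + 1) - 1\<close>) give a network of width
  \<open>2 n + k + 3\<close> and depth \<open>(k - 1) L\<close> whose errors add up to \<open>2 (k - 1) / n\<^sup>2\<^sup>L\<close> and whose
  Lipschitz constants multiply to \<open>4\<^sup>k\<^sup>-\<^sup>1\<close>; take \<open>n = W\<close>.\<close>

section \<open>Realizations of ReLU networks\<close>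

fun eval_hidden :: "layer list \<Rightarrow> (nat \<Rightarrow> real) \<Rightarrow> (nat \<Rightarrow> real)" where
  "eval_hidden [] x = x"
| "eval_hidden ((A, b, n) # Ts) x = eval_hidden Ts (\<lambda>i. relu (affine_map A b n x i))"

lemma eval_layers_snoc:
  "eval_layers (Ts @ [(A, b, n)]) x = affine_map A b n (eval_hidden Ts x)"
proof (induction Ts arbitrary: x)
  case (Cons T Ts)
  obtain A' b' n' where "T = (A', b', n')" by (cases T)
  with Cons show ?case by (cases "Ts @ [(A, b, n)]") auto
qed simp

lemma eval_hidden_append: "eval_hidden (Ts @ Us) x = eval_hidden Us (eval_hidden Ts x)"
proof (induction Ts arbitrary: x)
  case (Cons T Ts)
  then show ?case by (cases T) simp
qed simp

lemma affine_map_comp: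
  "affine_map A b n (affine_map M c m x) =
   affine_map (\<lambda>i j. \<Sum>l<n. A i l * M l j) (\<lambda>i. (\<Sum>l<n. A i l * c l) + b i) m x"
proof
  fix i
  have "(\<Sum>l<n. A i l * ((\<Sum>j<m. M l j * x j) + c l)) =
        (\<Sum>j<m. (\<Sum>l<n. A i l * M l j) * x j) + (\<Sum>l<n. A i l * c l)"
    by (simp add: distrib_left sum.distrib sum_distrib_left sum_distrib_right mult.assoc sum.swap[of _ "{..<n}"])
  then show "affine_map A b n (affine_map M c m x) i =
    affine_map (\<lambda>i j. \<Sum>l<n. A i l * M l j) (\<lambda>i. (\<Sum>l<n. A i l * c l) + b i) m x i"
    unfolding affine_map_def by simp
qed

definition hidden_shape :: "nat \<Rightarrow> nat \<Rightarrow> layer list \<Rightarrow> nat \<Rightarrow> bool" where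
  "hidden_shape d w Ts n \<longleftrightarrow> (case Ts of
      [] \<Rightarrow> n = d
    | T # Us \<Rightarrow> snd (snd T) = d \<and> (\<forall>U\<in>set Us. snd (snd U) \<le> w) \<and> n \<le> w)"

definition realizable :: "nat \<Rightarrow> nat \<Rightarrow> nat \<Rightarrow> ((nat \<Rightarrow> real) \<Rightarrow> (nat \<Rightarrow> real)) \<Rightarrow> bool" where
  "realizable d w l f \<longleftrightarrow> (\<exists>Ts A b n. length Ts = l \<and> hidden_shape d w Ts n \<and>
      (\<forall>x. f x = affine_map A b n (eval_hidden Ts x)))"

lemma realizableI:
  "length Ts = l \<Longrightarrow> hidden_shape d w Ts n \<Longrightarrow> (\<And>x. f x = affine_map A b n (eval_hidden Ts x)) \<Longrightarrow>
   realizable d w l f"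
  unfolding realizable_def by blast

lemma realizable_NN:
  assumes "realizable d w l f" "l \<le> L" "w \<le> W"
  shows "(\<lambda>x. f x 0) \<in> NN d W L"
proof -
  obtain Ts n A b where Ts: "length Ts = l" "hidden_shape d w Ts n"
    and f: "\<And>x. f x = affine_map A b n (eval_hidden Ts x)"
    using assms(1) unfolding realizable_def by blast
  show ?thesis unfolding NN_def
  proof (intro CollectI exI[of _ "Ts @ [(A, b, n)]"] conjI)
    show "length (Ts @ [(A, b, n)]) \<le> L + 1" using Ts assms by simp
    show "snd (snd (hd (Ts @ [(A, b, n)]))) = d" "\<forall>T\<in>set (tl (Ts @ [(A, b, n)])). snd (snd T) \<le> W"
      using Ts(2) assms(3) by (cases Ts; auto simp: hidden_shape_def)+
    show "\<forall>x. f x 0 = eval_layers (Ts @ [(A, b, n)]) x 0" using f by (simp add: eval_layers_snoc)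
  qed simp
qed

lemma realizable_affine: "realizable d w 0 (affine_map A b d)"
  by (rule realizableI[of "[]"]) (auto simp: hidden_shape_def)

lemma realizable_one_layer:
  assumes "n \<le> w" "\<And>x. f x = affine_map A\<^sub>2 b\<^sub>2 n (\<lambda>i. relu (affine_map A\<^sub>1 b\<^sub>1 d x i))"
  shows "realizable d w 1 f"
  by (rule realizableI[of "[(A\<^sub>1, b\<^sub>1, d)]"]) (use assms in \<open>auto simp: hidden_shape_def\<close>)

lemma realizable_affine_comp:
  assumes "realizable d w l f"
  shows "realizable d w l (\<lambda>x. affine_map M c m (f x))"
proof -
  obtain Ts n A b where "length Ts = l" "hidden_shape d w Ts n"
    and "\<And>x. f x = affine_map A b n (eval_hidden Ts x)"
    using assms unfolding realizable_def by blast
  then show ?thesis by (intro realizableI) (auto simp: affine_map_comp)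
qed

lemma realizable_comp:
  assumes f: "realizable d w\<^sub>1 l\<^sub>1 f" and g: "realizable m w\<^sub>2 l\<^sub>2 g" and "l\<^sub>2 \<ge> 1"
  shows "realizable d (max w\<^sub>1 w\<^sub>2) (l\<^sub>1 + l\<^sub>2) (\<lambda>x. g (f x))"
proof -
  obtain Ts\<^sub>1 n\<^sub>1 A\<^sub>1 b\<^sub>1 where Ts\<^sub>1: "length Ts\<^sub>1 = l\<^sub>1" "hidden_shape d w\<^sub>1 Ts\<^sub>1 n\<^sub>1"
    and f: "\<And>x. f x = affine_map A\<^sub>1 b\<^sub>1 n\<^sub>1 (eval_hidden Ts\<^sub>1 x)"
    using f unfolding realizable_def by blast
  obtain Ts\<^sub>2 n\<^sub>2 A\<^sub>2 b\<^sub>2 where Ts\<^sub>2: "length Ts\<^sub>2 = l\<^sub>2" "hidden_shape m w\<^sub>2 Ts\<^sub>2 n\<^sub>2"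
    and g: "\<And>x. g x = affine_map A\<^sub>2 b\<^sub>2 n\<^sub>2 (eval_hidden Ts\<^sub>2 x)"
    using g unfolding realizable_def by blast
  obtain B c m' Us where Us: "Ts\<^sub>2 = (B, c, m') # Us"
    using Ts\<^sub>2(1) \<open>l\<^sub>2 \<ge> 1\<close> by (cases Ts\<^sub>2) auto
  \<comment> \<open>the output layer of \<open>f\<close> is merged into the first hidden layer of \<open>g\<close>\<close>
  define Ts where "Ts = Ts\<^sub>1 @ (\<lambda>i j. \<Sum>l<m'. B i l * A\<^sub>1 l j, \<lambda>i. (\<Sum>l<m'. B i l * b\<^sub>1 l) + c i, n\<^sub>1) # Us"
  show ?thesis
  proof (rule realizableI)
    show "length Ts = l\<^sub>1 + l\<^sub>2" using Ts\<^sub>1 Ts\<^sub>2 Us by (simp add: Ts_def)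
    show "hidden_shape d (max w\<^sub>1 w\<^sub>2) Ts n\<^sub>2"
      using Ts\<^sub>1(2) Ts\<^sub>2(2) unfolding Ts_def Us hidden_shape_def
      by (cases Ts\<^sub>1) (auto simp: le_max_iff_disj)
    show "g (f x) = affine_map A\<^sub>2 b\<^sub>2 n\<^sub>2 (eval_hidden Ts x)" for x
      using f g by (simp add: Ts_def Us eval_hidden_append affine_map_comp)
  qed
qed

definition vconcat :: "nat \<Rightarrow> (nat \<Rightarrow> real) \<Rightarrow> (nat \<Rightarrow> real) \<Rightarrow> nat \<Rightarrow> real" where
  "vconcat m u v = (\<lambda>i. if i < m then u i else v (i - m))"

definition stack_rows :: "nat \<Rightarrow> (nat \<Rightarrow> nat \<Rightarrow> real) \<Rightarrow> (nat \<Rightarrow> nat \<Rightarrow> real) \<Rightarrow> nat \<Rightarrow> nat \<Rightarrow> real" where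
  "stack_rows m A\<^sub>1 A\<^sub>2 = (\<lambda>i j. if i < m then A\<^sub>1 i j else A\<^sub>2 (i - m) j)"

definition block_diag ::
  "nat \<Rightarrow> nat \<Rightarrow> (nat \<Rightarrow> nat \<Rightarrow> real) \<Rightarrow> (nat \<Rightarrow> nat \<Rightarrow> real) \<Rightarrow> nat \<Rightarrow> nat \<Rightarrow> real" where
  "block_diag m n A\<^sub>1 A\<^sub>2 = (\<lambda>i j. if i < m then (if j < n then A\<^sub>1 i j else 0)
      else (if j < n then 0 else A\<^sub>2 (i - m) (j - n)))"

lemma relu_vconcat: "(\<lambda>i. relu (vconcat m u v i)) = vconcat m (\<lambda>i. relu (u i)) (\<lambda>i. relu (v i))"
  by (auto simp: vconcat_def)

lemma affine_map_stack_rows: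
  "affine_map (stack_rows m A\<^sub>1 A\<^sub>2) (vconcat m b\<^sub>1 b\<^sub>2) n x =
   vconcat m (affine_map A\<^sub>1 b\<^sub>1 n x) (affine_map A\<^sub>2 b\<^sub>2 n x)"
  by (auto simp: affine_map_def vconcat_def stack_rows_def)

lemma sum_lessThan_add: "(\<Sum>j<m + (n::nat). f j) = (\<Sum>j<m. f j) + (\<Sum>j<n. f (m + j))"
  by (induction n) (simp_all add: add.assoc)

lemma affine_map_block_diag:
  "affine_map (block_diag m n\<^sub>1 A\<^sub>1 A\<^sub>2) (vconcat m b\<^sub>1 b\<^sub>2) (n\<^sub>1 + n\<^sub>2) (vconcat n\<^sub>1 z\<^sub>1 z\<^sub>2) =
   vconcat m (affine_map A\<^sub>1 b\<^sub>1 n\<^sub>1 z\<^sub>1) (affine_map A\<^sub>2 b\<^sub>2 n\<^sub>2 z\<^sub>2)"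
  unfolding affine_map_def sum_lessThan_add by (auto simp: vconcat_def block_diag_def)

definition in_width :: "nat \<Rightarrow> layer list \<Rightarrow> nat" where
  "in_width m Ts = (case Ts of [] \<Rightarrow> m | T # _ \<Rightarrow> snd (snd T))"

text \<open>\<open>stack_hidden m Ts\<^sub>1 Ts\<^sub>2\<close> runs the hidden layers \<open>Ts\<^sub>1\<close> and \<open>Ts\<^sub>2\<close> of equal length side by
  side on separate inputs; \<open>m\<close> is the number of outputs of \<open>Ts\<^sub>1\<close>.\<close>

fun stack_hidden :: "nat \<Rightarrow> layer list \<Rightarrow> layer list \<Rightarrow> layer list" where
  "stack_hidden m ((A\<^sub>1, b\<^sub>1, n\<^sub>1) # Ts\<^sub>1) ((A\<^sub>2, b\<^sub>2, n\<^sub>2) # Ts\<^sub>2) =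
     (block_diag (in_width m Ts\<^sub>1) n\<^sub>1 A\<^sub>1 A\<^sub>2, vconcat (in_width m Ts\<^sub>1) b\<^sub>1 b\<^sub>2, n\<^sub>1 + n\<^sub>2)
       # stack_hidden m Ts\<^sub>1 Ts\<^sub>2"
| "stack_hidden m _ _ = []"

lemma eval_hidden_stack_hidden:
  "length Ts\<^sub>1 = length Ts\<^sub>2 \<Longrightarrow>
   eval_hidden (stack_hidden m Ts\<^sub>1 Ts\<^sub>2) (vconcat (in_width m Ts\<^sub>1) z\<^sub>1 z\<^sub>2) =
   vconcat m (eval_hidden Ts\<^sub>1 z\<^sub>1) (eval_hidden Ts\<^sub>2 z\<^sub>2)"
proof (induction Ts\<^sub>1 Ts\<^sub>2 arbitrary: z\<^sub>1 z\<^sub>2 rule: list_induct2)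
  case (Cons T\<^sub>1 Ts\<^sub>1 T\<^sub>2 Ts\<^sub>2)
  then show ?case
    by (cases T\<^sub>1; cases T\<^sub>2) (simp add: in_width_def affine_map_block_diag relu_vconcat)
qed (simp add: in_width_def)

lemma length_stack_hidden:
  "length Ts\<^sub>1 = length Ts\<^sub>2 \<Longrightarrow> length (stack_hidden m Ts\<^sub>1 Ts\<^sub>2) = length Ts\<^sub>1"
proof (induction Ts\<^sub>1 Ts\<^sub>2 rule: list_induct2)
  case (Cons T\<^sub>1 Ts\<^sub>1 T\<^sub>2 Ts\<^sub>2)
  then show ?case by (cases T\<^sub>1; cases T\<^sub>2) auto
qed simp

lemma widths_stack_hidden:
  "length Ts\<^sub>1 = length Ts\<^sub>2 \<Longrightarrow> \<forall>T\<in>set Ts\<^sub>1. snd (snd T) \<le> w\<^sub>1 \<Longrightarrow> \<forall>T\<in>set Ts\<^sub>2. snd (snd T) \<le> w\<^sub>2 \<Longrightarrow>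
   \<forall>T\<in>set (stack_hidden m Ts\<^sub>1 Ts\<^sub>2). snd (snd T) \<le> w\<^sub>1 + w\<^sub>2"
proof (induction Ts\<^sub>1 Ts\<^sub>2 rule: list_induct2)
  case (Cons T\<^sub>1 Ts\<^sub>1 T\<^sub>2 Ts\<^sub>2)
  then show ?case by (cases T\<^sub>1; cases T\<^sub>2) (auto simp: add_mono)
qed simp

lemma realizable_vconcat:
  assumes f: "realizable d w\<^sub>1 l f" and g: "realizable d w\<^sub>2 l g"
  shows "realizable d (w\<^sub>1 + w\<^sub>2) l (\<lambda>x. vconcat m (f x) (g x))"
proof -
  obtain Ts\<^sub>1 n\<^sub>1 A\<^sub>1 b\<^sub>1 where Ts\<^sub>1: "length Ts\<^sub>1 = l" "hidden_shape d w\<^sub>1 Ts\<^sub>1 n\<^sub>1"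
    and f: "\<And>x. f x = affine_map A\<^sub>1 b\<^sub>1 n\<^sub>1 (eval_hidden Ts\<^sub>1 x)"
    using f unfolding realizable_def by blast
  obtain Ts\<^sub>2 n\<^sub>2 A\<^sub>2 b\<^sub>2 where Ts\<^sub>2: "length Ts\<^sub>2 = l" "hidden_shape d w\<^sub>2 Ts\<^sub>2 n\<^sub>2"
    and g: "\<And>x. g x = affine_map A\<^sub>2 b\<^sub>2 n\<^sub>2 (eval_hidden Ts\<^sub>2 x)"
    using g unfolding realizable_def by blast
  show ?thesis
  proof (cases l)
    case 0
    then have "Ts\<^sub>1 = []" "Ts\<^sub>2 = []" "n\<^sub>1 = d" "n\<^sub>2 = d"
      using Ts\<^sub>1 Ts\<^sub>2 by (auto simp: hidden_shape_def)
    then show ?thesis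
      using 0 f g
      by (intro realizableI[where Ts = "[]" and A = "stack_rows m A\<^sub>1 A\<^sub>2" and b = "vconcat m b\<^sub>1 b\<^sub>2"])
        (auto simp: hidden_shape_def affine_map_stack_rows)
  next
    case (Suc l')
    obtain C\<^sub>1 c\<^sub>1 Us\<^sub>1 where Us\<^sub>1: "Ts\<^sub>1 = (C\<^sub>1, c\<^sub>1, d) # Us\<^sub>1"
      using Ts\<^sub>1 Suc by (cases Ts\<^sub>1) (auto simp: hidden_shape_def)
    obtain C\<^sub>2 c\<^sub>2 Us\<^sub>2 where Us\<^sub>2: "Ts\<^sub>2 = (C\<^sub>2, c\<^sub>2, d) # Us\<^sub>2"
      using Ts\<^sub>2 Suc by (cases Ts\<^sub>2) (auto simp: hidden_shape_def)
    have len: "length Us\<^sub>1 = length Us\<^sub>2" using Ts\<^sub>1(1) Ts\<^sub>2(1) Us\<^sub>1 Us\<^sub>2 by simp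
    define s where "s = in_width n\<^sub>1 Us\<^sub>1"
    \<comment> \<open>both first layers read the same input; the remaining layers act on disjoint blocks\<close>
    define Ts where "Ts = (stack_rows s C\<^sub>1 C\<^sub>2, vconcat s c\<^sub>1 c\<^sub>2, d) # stack_hidden n\<^sub>1 Us\<^sub>1 Us\<^sub>2"
    have "eval_hidden Ts x = vconcat n\<^sub>1 (eval_hidden Ts\<^sub>1 x) (eval_hidden Ts\<^sub>2 x)" for x
      using eval_hidden_stack_hidden[OF len, of n\<^sub>1]
      by (simp add: Ts_def Us\<^sub>1 Us\<^sub>2 s_def affine_map_stack_rows relu_vconcat)
    then show ?thesis
    proof (intro realizableI[where A = "block_diag m n\<^sub>1 A\<^sub>1 A\<^sub>2" and b = "vconcat m b\<^sub>1 b\<^sub>2"])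
      show "length Ts = l" using len Ts\<^sub>1(1) Us\<^sub>1 by (simp add: Ts_def length_stack_hidden)
      show "hidden_shape d (w\<^sub>1 + w\<^sub>2) Ts (n\<^sub>1 + n\<^sub>2)"
        using Ts\<^sub>1(2) Ts\<^sub>2(2) widths_stack_hidden[OF len, of w\<^sub>1 w\<^sub>2 n\<^sub>1]
        by (simp add: Ts_def Us\<^sub>1 Us\<^sub>2 hidden_shape_def add_mono)
    qed (simp add: f g affine_map_block_diag)
  qed
qed

section \<open>The sawtooth and the interpolant of the square\<close>

text \<open>The distance from \<open>y\<close> to the nearest even integer.\<close>

definition sawtooth :: "real \<Rightarrow> real" where
  "sawtooth y = (if even \<lfloor>y\<rfloor> then y - of_int \<lfloor>y\<rfloor> else of_int \<lfloor>y\<rfloor> + 1 - y)"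

text \<open>The chord of \<open>y\<^sup>2\<close> through the nodes \<open>j\<close> and \<open>j + 1\<close>; taking the chord of the cell
  containing \<open>y\<close> gives the piecewise linear interpolant of \<open>y\<^sup>2\<close> at the integers.\<close>

definition sq_chord :: "int \<Rightarrow> real \<Rightarrow> real" where
  "sq_chord j y = (2 * of_int j + 1) * y - of_int j ^ 2 - of_int j"

definition sq_interp :: "real \<Rightarrow> real" where
  "sq_interp y = sq_chord \<lfloor>y\<rfloor> y"

lemma floor_eq_or_right_end:
  assumes "of_int j \<le> y" "y \<le> of_int j + 1"
  shows "\<lfloor>y\<rfloor> = j \<or> (\<lfloor>y\<rfloor> = j + 1 \<and> y = of_int j + 1)"
  using assms by (cases "y < of_int j + 1") (auto simp: floor_eq_iff)

lemma sq_interp_on_cell: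
  assumes "of_int j \<le> y" "y \<le> of_int j + 1"
  shows "sq_interp y = sq_chord j y"
  using floor_eq_or_right_end[OF assms]
  by (auto simp: sq_interp_def sq_chord_def algebra_simps power2_eq_square)

lemma sawtooth_on_cell:
  assumes "of_int j \<le> y" "y \<le> of_int j + 1"
  shows "sawtooth y = (if even j then y - of_int j else of_int j + 1 - y)"
  using floor_eq_or_right_end[OF assms] by (auto simp: sawtooth_def)

lemma sawtooth_uminus: "sawtooth (- y) = sawtooth y"
proof -
  have y: "of_int \<lfloor>y\<rfloor> \<le> y" "y \<le> of_int \<lfloor>y\<rfloor> + 1" by linarith+
  then have "of_int (- \<lfloor>y\<rfloor> - 1) \<le> - y" "- y \<le> of_int (- \<lfloor>y\<rfloor> - 1) + 1" by linarith+
  then show ?thesis using sawtooth_on_cell[OF y] sawtooth_on_cell[of "- \<lfloor>y\<rfloor> - 1"] by auto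
qed

lemma sawtooth_add_even: "sawtooth (y + 2 * of_int m) = sawtooth y"
proof -
  have y: "of_int \<lfloor>y\<rfloor> \<le> y" "y \<le> of_int \<lfloor>y\<rfloor> + 1" by linarith+
  then have "of_int (\<lfloor>y\<rfloor> + 2 * m) \<le> y + 2 * of_int m" "y + 2 * of_int m \<le> of_int (\<lfloor>y\<rfloor> + 2 * m) + 1"
    by simp_all
  then show ?thesis using sawtooth_on_cell[OF y] sawtooth_on_cell[of "\<lfloor>y\<rfloor> + 2 * m"] by auto
qed

lemma sawtooth_bounds: "0 \<le> sawtooth y" "sawtooth y \<le> 1"
  unfolding sawtooth_def by (simp_all; linarith)+

lemma sawtooth_scale: "sawtooth (real n * sawtooth y) = sawtooth (real n * y)"
proof -
  define j where "j = \<lfloor>y\<rfloor>"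
  have y: "of_int j \<le> y" "y \<le> of_int j + 1" unfolding j_def by linarith+
  show ?thesis
  proof (cases "even j")
    case True
    then obtain m where "of_int j = 2 * (of_int m :: real)" by (metis evenE of_int_mult of_int_numeral)
    then have t: "sawtooth y = y - 2 * of_int m" using sawtooth_on_cell[OF y] True by simp
    have "real n * sawtooth y = real n * y + 2 * of_int (- (int n * m))"
      unfolding t by (simp add: algebra_simps)
    then show ?thesis by (simp only: sawtooth_add_even)
  next
    case False
    then obtain m where "of_int j + 1 = 2 * (of_int m :: real)"
      by (metis even_plus_one_iff evenE of_int_add of_int_1 of_int_mult of_int_numeral)
    then have t: "sawtooth y = 2 * of_int m - y" using sawtooth_on_cell[OF y] False by simp
    have "real n * sawtooth y = - (real n * y) + 2 * of_int (int n * m)"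
      unfolding t by (simp add: algebra_simps)
    then show ?thesis by (simp only: sawtooth_add_even sawtooth_uminus)
  qed
qed

text \<open>As \<open>sawtooth y \<in> [0, 1]\<close>, the last term is a single layer of \<open>n\<close> ReLUs applied to the
  sawtooth (\<open>hinge_sum_sq_interp\<close> below), so iterating this identity refines the grid
  \<open>n\<close>-fold per layer.\<close>

lemma sq_interp_scale:
  "sq_interp (real n * y) = real n ^ 2 * (sq_interp y - sawtooth y) + sq_interp (real n * sawtooth y)"
proof -
  define j where "j = \<lfloor>y\<rfloor>"
  define J where "J = \<lfloor>real n * y\<rfloor>"
  have y: "of_int j \<le> y" "y \<le> of_int j + 1" unfolding j_def by linarith+
  have ny: "of_int J \<le> real n * y" "real n * y \<le> of_int J + 1" unfolding J_def by linarith+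
  show ?thesis
  proof (cases "even j")
    case True
    then have t: "sawtooth y = y - of_int j" using sawtooth_on_cell[OF y] by simp
    have "of_int (J - int n * j) \<le> real n * sawtooth y" "real n * sawtooth y \<le> of_int (J - int n * j) + 1"
      using ny unfolding t by (simp_all add: algebra_simps)
    from sq_interp_on_cell[OF this] show ?thesis
      unfolding sq_interp_on_cell[OF y] sq_interp_on_cell[OF ny] t
      by (simp add: sq_chord_def algebra_simps power2_eq_square)
  next
    case False
    then have t: "sawtooth y = of_int j + 1 - y" using sawtooth_on_cell[OF y] by simp
    have "of_int (int n * (j + 1) - J - 1) \<le> real n * sawtooth y"
      "real n * sawtooth y \<le> of_int (int n * (j + 1) - J - 1) + 1"
      using ny unfolding t by (simp_all add: algebra_simps)
    from sq_interp_on_cell[OF this] show ?thesis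
      unfolding sq_interp_on_cell[OF y] sq_interp_on_cell[OF ny] t
      by (simp add: sq_chord_def algebra_simps power2_eq_square)
  qed
qed

lemma sq_chord_le_sq_interp: "sq_chord i y \<le> sq_interp y"
proof -
  define j where "j = \<lfloor>y\<rfloor>"
  have y: "of_int j \<le> y" "y \<le> of_int j + 1" unfolding j_def by linarith+
  show ?thesis
  proof (cases "i = j")
    case False
    have "sq_interp y - sq_chord i y =
        (y - of_int i) * (y - of_int i - 1) - (y - of_int j) * (y - of_int j - 1)"
      unfolding sq_interp_on_cell[OF y] sq_chord_def by (simp add: algebra_simps power2_eq_square)
    moreover have "(y - of_int j) * (y - of_int j - 1) \<le> 0"
      using y by (intro mult_nonneg_nonpos) auto
    moreover have "0 \<le> (y - of_int i) * (y - of_int i - 1)"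
    proof (cases "i < j")
      case True
      then have "of_int i + 1 \<le> y" using y by linarith
      then show ?thesis by (intro mult_nonneg_nonneg) auto
    next
      case False
      then have "y \<le> of_int i" using y \<open>i \<noteq> j\<close> by linarith
      then show ?thesis by (intro mult_nonpos_nonpos) auto
    qed
    ultimately show ?thesis by linarith
  qed (simp add: sq_interp_on_cell[OF y])
qed

lemma sq_interp_bounds: "y\<^sup>2 \<le> sq_interp y" "sq_interp y \<le> y\<^sup>2 + 1 / 4"
proof -
  define j where "j = \<lfloor>y\<rfloor>"
  have y: "of_int j \<le> y" "y \<le> of_int j + 1" unfolding j_def by linarith+
  have q: "sq_interp y = y\<^sup>2 + (y - of_int j) * (of_int j + 1 - y)"
    unfolding sq_interp_on_cell[OF y] sq_chord_def by (simp add: algebra_simps power2_eq_square)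
  show "y\<^sup>2 \<le> sq_interp y" unfolding q using y by simp
  have "(y - of_int j) * (of_int j + 1 - y) \<le> 1 / 4"
    using zero_le_power2[of "y - of_int j - 1 / 2"] by (simp add: algebra_simps power2_eq_square)
  then show "sq_interp y \<le> y\<^sup>2 + 1 / 4" unfolding q by simp
qed

lemma sq_interp_mono_lipschitz:
  assumes "0 \<le> y'" "y' \<le> y" "y \<le> N"
  shows "0 \<le> sq_interp y - sq_interp y'" "sq_interp y - sq_interp y' \<le> (2 * N + 1) * (y - y')"
proof -
  have chord_diff: "sq_chord i y - sq_chord i y' = (2 * of_int i + 1) * (y - y')" for i
    by (simp add: sq_chord_def algebra_simps)
  have "0 \<le> (2 * of_int \<lfloor>y'\<rfloor> + 1) * (y - y')" using assms by simp
  then show "0 \<le> sq_interp y - sq_interp y'"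
    using sq_chord_le_sq_interp[of "\<lfloor>y'\<rfloor>" y] chord_diff[of "\<lfloor>y'\<rfloor>"]
    unfolding sq_interp_def by linarith
  have "(2 * of_int \<lfloor>y\<rfloor> + 1) * (y - y') \<le> (2 * N + 1) * (y - y')"
    using assms by (intro mult_right_mono) linarith+
  then show "sq_interp y - sq_interp y' \<le> (2 * N + 1) * (y - y')"
    using sq_chord_le_sq_interp[of "\<lfloor>y\<rfloor>" y'] chord_diff[of "\<lfloor>y\<rfloor>"]
    unfolding sq_interp_def by linarith
qed

lemma exists_unit_cell:
  assumes "1 \<le> n" "0 \<le> y" "y \<le> real n"
  obtains i where "i < n" "real i \<le> y" "y \<le> real i + 1"
proof (cases "y < real n")
  case True
  have "real (nat \<lfloor>y\<rfloor>) = of_int \<lfloor>y\<rfloor>" using assms by simp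
  then have "real (nat \<lfloor>y\<rfloor>) \<le> y" "y \<le> real (nat \<lfloor>y\<rfloor>) + 1" "nat \<lfloor>y\<rfloor> < n"
    using True by linarith+
  then show ?thesis by (rule that[rotated])
next
  case False
  then show ?thesis using assms by (intro that[of "n - 1"]) (auto simp: of_nat_diff)
qed

text \<open>On the cell \<open>[i, i + 1]\<close> the value \<open>n y - sq_chord i y\<close> interpolates linearly between
  \<open>(n - i) i\<close> and \<open>(n - i - 1) (i + 1)\<close>, both nonnegative for \<open>i < n\<close>.\<close>

lemma sq_interp_le_linear:
  assumes "1 \<le> n" "0 \<le> y" "y \<le> real n"
  shows "sq_interp y \<le> real n * y"
proof -
  obtain i where i: "i < n" "real i \<le> y" "y \<le> real i + 1"
    using exists_unit_cell[OF assms] .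
  define t where "t = y - real i"
  have "real n * y - sq_chord (int i) y =
      (1 - t) * ((real n - real i) * real i) + t * ((real n - real i - 1) * (real i + 1))"
    unfolding t_def sq_chord_def by (simp add: algebra_simps power2_eq_square)
  moreover have "0 \<le> (1 - t) * ((real n - real i) * real i)" "0 \<le> t * ((real n - real i - 1) * (real i + 1))"
    using i by (auto simp: t_def)
  moreover have "sq_interp y = sq_chord (int i) y" using i by (intro sq_interp_on_cell) auto
  ultimately show ?thesis by linarith
qed

section \<open>Approximate squaring and multiplication\<close>

definition hinge_sum :: "(nat \<Rightarrow> real) \<Rightarrow> nat \<Rightarrow> real \<Rightarrow> real" where
  "hinge_sum c n y = (\<Sum>j<n. c j * relu (y - real j))"

definition sawtooth_coeff :: "nat \<Rightarrow> real" where
  "sawtooth_coeff j = (if j = 0 then 1 else 2 * (-1) ^ j)"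

definition sq_interp_coeff :: "nat \<Rightarrow> real" where
  "sq_interp_coeff j = (if j = 0 then 1 else 2)"

lemma hinge_sum_on_cell:
  assumes "i < n" "real i \<le> y" "y \<le> real i + 1"
  shows "hinge_sum c n y = (\<Sum>j\<le>i. c j * (y - real j))"
proof -
  have "c j * relu (y - real j) = (if j \<le> i then c j * (y - real j) else 0)" for j
  proof (cases "j \<le> i")
    case True
    then have "real j \<le> y" using assms by linarith
    with True show ?thesis by (simp add: relu_def)
  next
    case False
    then have "y \<le> real j" using assms by linarith
    with False show ?thesis by (simp add: relu_def)
  qed
  then have "hinge_sum c n y = (\<Sum>j\<in>{..<n} \<inter> {j. j \<le> i}. c j * (y - real j))"
    by (simp add: hinge_sum_def sum.If_cases)
  also have "{..<n} \<inter> {j. j \<le> i} = {..i}" using assms(1) by auto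
  finally show ?thesis .
qed

lemma hinge_sum_sawtooth:
  assumes "1 \<le> n" "0 \<le> y" "y \<le> real n"
  shows "hinge_sum sawtooth_coeff n y = sawtooth y"
proof -
  obtain i where i: "i < n" "real i \<le> y" "y \<le> real i + 1"
    using exists_unit_cell[OF assms] .
  have "(\<Sum>j\<le>i. sawtooth_coeff j * (y - real j)) = (if even i then y - real i else real i + 1 - y)"
    by (induction i) (auto simp: sawtooth_coeff_def algebra_simps)
  then show ?thesis using sawtooth_on_cell[of "int i" y] i by (simp add: hinge_sum_on_cell)
qed

lemma hinge_sum_sq_interp:
  assumes "1 \<le> n" "0 \<le> y" "y \<le> real n"
  shows "hinge_sum sq_interp_coeff n y = sq_interp y"
proof -
  obtain i where i: "i < n" "real i \<le> y" "y \<le> real i + 1"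
    using exists_unit_cell[OF assms] .
  have "(\<Sum>j\<le>i. sq_interp_coeff j * (y - real j)) = sq_chord (int i) y"
    by (induction i) (auto simp: sq_interp_coeff_def sq_chord_def algebra_simps power2_eq_square)
  then show ?thesis using sq_interp_on_cell[of "int i" y] i by (simp add: hinge_sum_on_cell)
qed

text \<open>The interpolant of \<open>w\<^sup>2\<close> on the grid \<open>\<int> / N\<close>.\<close>

definition sq_approx :: "nat \<Rightarrow> real \<Rightarrow> real" where
  "sq_approx N w = sq_interp (real N * w) / real N ^ 2"

text \<open>On the state \<open>z = (sawtooth (N w), sq_approx N w)\<close> one step passes from the grid \<open>\<int> / N\<close>
  to \<open>\<int> / (n N)\<close> by \<open>sq_interp_scale\<close>; \<open>relu (n s) / n\<close> is just \<open>s \<ge> 0\<close>, written so that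
  every term is a ReLU of an affine function of \<open>z\<close>.\<close>

definition sq_step :: "nat \<Rightarrow> nat \<Rightarrow> (nat \<Rightarrow> real) \<Rightarrow> (nat \<Rightarrow> real)" where
  "sq_step n N z = (\<lambda>i.
     if i = 0 then hinge_sum sawtooth_coeff n (real n * z 0)
     else if i = 1 then relu (z 1) -
       (relu (real n * z 0) / real n - hinge_sum sq_interp_coeff n (real n * z 0) / real n ^ 2) / real N ^ 2
     else 0)"

lemma realizable_sq_step:
  assumes "1 \<le> n"
  shows "realizable 2 (n + 1) 1 (sq_step n N)"
proof (rule realizable_one_layer)
  define A\<^sub>1 :: "nat \<Rightarrow> nat \<Rightarrow> real" where "A\<^sub>1 = (\<lambda>i j. if i < n then (if j = 0 then real n else 0)
      else if i = n \<and> j = 1 then 1 else 0)"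
  define b\<^sub>1 :: "nat \<Rightarrow> real" where "b\<^sub>1 = (\<lambda>i. if i < n then - real i else 0)"
  define c where "c = (\<lambda>j. (sq_interp_coeff j / real n ^ 2 - (if j = 0 then 1 / real n else 0)) / real N ^ 2)"
  define A\<^sub>2 :: "nat \<Rightarrow> nat \<Rightarrow> real" where "A\<^sub>2 = (\<lambda>i j. if i = 0 then (if j < n then sawtooth_coeff j else 0)
      else if i = 1 then (if j < n then c j else if j = n then 1 else 0) else 0)"
  fix z :: "nat \<Rightarrow> real"
  define h where "h = (\<lambda>i. relu (affine_map A\<^sub>1 b\<^sub>1 2 z i))"
  have h: "\<And>j. j < n \<Longrightarrow> h j = relu (real n * z 0 - real j)" "h n = relu (z 1)"
    by (simp_all add: h_def affine_map_def numeral_2_eq_2 A\<^sub>1_def b\<^sub>1_def)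
  have "(\<Sum>j<n. c j * relu (real n * z 0 - real j)) = (hinge_sum sq_interp_coeff n (real n * z 0) / real n ^ 2
      - (\<Sum>j<n. if j = 0 then relu (real n * z 0 - real j) / real n else 0)) / real N ^ 2"
    by (simp add: c_def hinge_sum_def sum_divide_distrib sum_subtractf left_diff_distrib
        diff_divide_distrib if_distrib[of "\<lambda>t. t * _"] if_distrib[of "\<lambda>t. t / _"] cong: if_cong)
  also have "(\<Sum>j<n. if j = 0 then relu (real n * z 0 - real j) / real n else 0) = relu (real n * z 0) / real n"
    using assms by simp
  finally have row1: "(\<Sum>j<n. c j * relu (real n * z 0 - real j)) =
      (hinge_sum sq_interp_coeff n (real n * z 0) / real n ^ 2 - relu (real n * z 0) / real n) / real N ^ 2" .
  show "sq_step n N z = affine_map A\<^sub>2 (\<lambda>_. 0) (n + 1) h"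
    by (rule ext) (auto simp: sq_step_def affine_map_def A\<^sub>2_def h row1 hinge_sum_def diff_divide_distrib)
qed simp

fun sq_iter :: "nat \<Rightarrow> nat \<Rightarrow> (nat \<Rightarrow> real) \<Rightarrow> (nat \<Rightarrow> real)" where
  "sq_iter n 0 z = z"
| "sq_iter n (Suc l) z = sq_step n (n ^ l) (sq_iter n l z)"

lemma realizable_sq_iter:
  assumes "1 \<le> n" "1 \<le> l"
  shows "realizable 2 (n + 1) l (sq_iter n l)"
  using assms(2)
proof (induction l rule: dec_induct)
  case base
  have "sq_iter n 1 = sq_step n 1" by (rule ext) simp
  then show ?case using realizable_sq_step[OF assms(1)] by simp
next
  case (step l)
  have "realizable 2 (max (n + 1) (n + 1)) (l + 1) (\<lambda>z. sq_step n (n ^ l) (sq_iter n l z))"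
    using realizable_comp[OF step.IH realizable_sq_step[OF assms(1)]] by simp
  then show ?case by simp
qed

lemma sq_iter_values:
  assumes "1 \<le> n" "0 \<le> w" "w \<le> 1" "z 0 = w" "z 1 = w"
  shows "sq_iter n l z 0 = sawtooth (real n ^ l * w) \<and> sq_iter n l z 1 = sq_approx (n ^ l) w"
proof (induction l)
  case 0
  have "of_int 0 \<le> w" "w \<le> of_int 0 + 1" using assms by simp_all
  with assms show ?case
    using sawtooth_on_cell[of 0 w] sq_interp_on_cell[of 0 w] by (simp add: sq_approx_def sq_chord_def)
next
  case (Suc l)
  define y where "y = real n ^ l * w"
  define s where "s = sawtooth y"
  have s: "0 \<le> s" "s \<le> 1" unfolding s_def by (rule sawtooth_bounds)+
  have IH: "sq_iter n l z 0 = s" "sq_iter n l z 1 = sq_interp y / (real n ^ l)\<^sup>2"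
    using Suc unfolding s_def y_def sq_approx_def by simp_all
  have n: "real n > 0" "0 \<le> real n * s" "real n * s \<le> real n" using assms s by auto
  have "0 \<le> sq_interp y" using sq_interp_bounds(1)[of y] by (meson order.trans zero_le_power2)
  then have "relu (sq_iter n l z 1) = sq_interp y / (real n ^ l)\<^sup>2" unfolding IH by (simp add: relu_def)
  moreover have "relu (real n * s) = real n * s" using n by (simp add: relu_def)
  moreover have "sq_interp y / (real n ^ l)\<^sup>2 -
      (real n * s / real n - sq_interp (real n * s) / (real n)\<^sup>2) / (real n ^ l)\<^sup>2
      = sq_approx (n ^ Suc l) w"
    using sq_interp_scale[of n y] n
    by (simp add: sq_approx_def y_def s_def mult.assoc field_simps power2_eq_square)
  moreover have "sawtooth (real n * s) = sawtooth (real n ^ Suc l * w)"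
    unfolding s_def y_def sawtooth_scale by (simp add: mult.assoc)
  ultimately show ?case
    using assms(1) n by (simp add: sq_step_def IH hinge_sum_sawtooth hinge_sum_sq_interp)
qed

lemma sq_approx_bounds:
  assumes "1 \<le> N" "0 \<le> w" "w \<le> 1"
  shows "w\<^sup>2 \<le> sq_approx N w" "sq_approx N w \<le> w\<^sup>2 + 1 / (4 * real N ^ 2)" "sq_approx N w \<le> w"
proof -
  have N: "real N > 0" using assms by simp
  show "w\<^sup>2 \<le> sq_approx N w" "sq_approx N w \<le> w\<^sup>2 + 1 / (4 * real N ^ 2)"
    using sq_interp_bounds[of "real N * w"] N
    by (simp_all add: sq_approx_def field_simps power_mult_distrib)
  have "sq_interp (real N * w) \<le> real N * (real N * w)"
    using assms by (intro sq_interp_le_linear) (auto simp: mult_left_le)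
  then show "sq_approx N w \<le> w" using N by (simp add: sq_approx_def field_simps power2_eq_square)
qed

lemma sq_approx_mono_lipschitz:
  assumes "1 \<le> N" "0 \<le> w'" "w' \<le> w" "w \<le> 1"
  shows "0 \<le> sq_approx N w - sq_approx N w'" "sq_approx N w - sq_approx N w' \<le> 3 * (w - w')"
proof -
  have N: "real N > 0" using assms by simp
  have "0 \<le> real N * w'" "real N * w' \<le> real N * w" "real N * w \<le> real N"
    using assms by (auto simp: mult_left_mono mult_left_le)
  note lip = sq_interp_mono_lipschitz[OF this]
  have diff: "sq_approx N w - sq_approx N w' = (sq_interp (real N * w) - sq_interp (real N * w')) / real N ^ 2"
    by (simp add: sq_approx_def diff_divide_distrib)
  show "0 \<le> sq_approx N w - sq_approx N w'" unfolding diff using lip(1) by simp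
  have "(2 * real N + 1) * (real N * w - real N * w') = (2 * real N ^ 2 + real N) * (w - w')"
    by (simp add: algebra_simps power2_eq_square)
  also have "\<dots> \<le> (3 * real N ^ 2) * (w - w')"
    using assms by (intro mult_right_mono) (auto simp: power2_eq_square)
  finally have "(2 * real N + 1) * (real N * w - real N * w') \<le> 3 * (w - w') * real N ^ 2"
    by (simp only: mult.commute mult.left_commute)
  with lip(2) N show "sq_approx N w - sq_approx N w' \<le> 3 * (w - w')"
    unfolding diff by (simp add: divide_le_eq)
qed

text \<open>Since \<open>t\<^sup>2 = 4 ((t + 1) / 2)\<^sup>2 - 2 t - 1\<close>, this approximates \<open>t\<^sup>2\<close> on \<open>[-1, 1]\<close>.\<close>

definition sym_sq_approx :: "nat \<Rightarrow> real \<Rightarrow> real" where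
  "sym_sq_approx N t = 4 * sq_approx N ((t + 1) / 2) - 2 * t - 1"

lemma sym_sq_approx_bounds:
  assumes "1 \<le> N" "\<bar>t\<bar> \<le> 1"
  shows "0 \<le> sym_sq_approx N t" "sym_sq_approx N t \<le> 1" "\<bar>sym_sq_approx N t - t\<^sup>2\<bar> \<le> 1 / real N ^ 2"
proof -
  define w where "w = (t + 1) / 2"
  have w: "0 \<le> w" "w \<le> 1" using assms unfolding w_def by auto
  have sq: "sym_sq_approx N t = 4 * sq_approx N w - 4 * w + 1"
    unfolding sym_sq_approx_def w_def by (simp add: algebra_simps)
  have t2: "t\<^sup>2 = 4 * w\<^sup>2 - 4 * w + 1" unfolding w_def by (simp add: power2_eq_square field_simps)
  note b = sq_approx_bounds[OF assms(1) w]
  show "0 \<le> sym_sq_approx N t"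
    unfolding sq using b(1) zero_le_power2[of "2 * w - 1"] by (simp add: power2_eq_square algebra_simps)
  show "sym_sq_approx N t \<le> 1" unfolding sq using b(3) by simp
  show "\<bar>sym_sq_approx N t - t\<^sup>2\<bar> \<le> 1 / real N ^ 2" unfolding sq t2 using b(1,2) by simp
qed

lemma sym_sq_approx_lipschitz:
  assumes "1 \<le> N" "\<bar>t\<bar> \<le> 1" "\<bar>t'\<bar> \<le> 1"
  shows "\<bar>sym_sq_approx N t - sym_sq_approx N t'\<bar> \<le> 4 * \<bar>t - t'\<bar>"
proof -
  have ordered: "\<bar>sym_sq_approx N t - sym_sq_approx N t'\<bar> \<le> 4 * (t - t')"
    if "-1 \<le> t'" "t' \<le> t" "t \<le> 1" for t t'
  proof -
    define D where "D = sq_approx N ((t + 1) / 2) - sq_approx N ((t' + 1) / 2)"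
    have "0 \<le> D" "D \<le> 3 * ((t + 1) / 2 - (t' + 1) / 2)"
      unfolding D_def using that by (intro sq_approx_mono_lipschitz[OF assms(1)]; simp)+
    moreover have "sym_sq_approx N t - sym_sq_approx N t' = 4 * D - 2 * (t - t')"
      unfolding sym_sq_approx_def D_def by (simp add: algebra_simps)
    ultimately show ?thesis using that by (simp add: abs_le_iff field_simps)
  qed
  show ?thesis
    using ordered[of t' t] ordered[of t t'] assms by (cases "t' \<le> t") (auto simp: abs_minus_commute)
qed

text \<open>Polarization: \<open>a b = ((a + b) / 2)\<^sup>2 - ((a - b) / 2)\<^sup>2\<close>.\<close>

definition mult_approx :: "nat \<Rightarrow> real \<Rightarrow> real \<Rightarrow> real" where
  "mult_approx N a b = sym_sq_approx N ((a + b) / 2) - sym_sq_approx N ((a - b) / 2)"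

lemma mult_approx_eq_sq_approx:
  "mult_approx N a b = 4 * sq_approx N (((a + b) / 2 + 1) / 2) - 4 * sq_approx N (((a - b) / 2 + 1) / 2) - 2 * b"
  by (simp add: mult_approx_def sym_sq_approx_def field_simps)

lemma mult_approx_bounds:
  assumes "1 \<le> N" "\<bar>a\<bar> \<le> 1" "\<bar>b\<bar> \<le> 1"
  shows "\<bar>mult_approx N a b\<bar> \<le> 1" "\<bar>mult_approx N a b - a * b\<bar> \<le> 2 / real N ^ 2"
proof -
  have "\<bar>(a + b) / 2\<bar> \<le> 1" "\<bar>(a - b) / 2\<bar> \<le> 1" using assms by (auto simp: abs_le_iff)
  note plus = sym_sq_approx_bounds[OF assms(1) this(1)] and minus = sym_sq_approx_bounds[OF assms(1) this(2)]
  show "\<bar>mult_approx N a b\<bar> \<le> 1" unfolding mult_approx_def using plus minus by (simp add: abs_le_iff)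
  have "a * b = ((a + b) / 2)\<^sup>2 - ((a - b) / 2)\<^sup>2" by (simp add: power2_eq_square field_simps)
  then show "\<bar>mult_approx N a b - a * b\<bar> \<le> 2 / real N ^ 2"
    unfolding mult_approx_def using plus(3) minus(3) by (simp add: abs_le_iff)
qed

lemma mult_approx_lipschitz:
  assumes "1 \<le> N" "\<bar>a\<bar> \<le> 1" "\<bar>b\<bar> \<le> 1" "\<bar>a'\<bar> \<le> 1" "\<bar>b'\<bar> \<le> 1"
  shows "\<bar>mult_approx N a b - mult_approx N a' b'\<bar> \<le> 4 * (\<bar>a - a'\<bar> + \<bar>b - b'\<bar>)"
proof -
  have "\<bar>(a + b) / 2\<bar> \<le> 1" "\<bar>(a' + b') / 2\<bar> \<le> 1" "\<bar>(a - b) / 2\<bar> \<le> 1" "\<bar>(a' - b') / 2\<bar> \<le> 1"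
    using assms by (auto simp: abs_le_iff)
  note plus = sym_sq_approx_lipschitz[OF assms(1) this(1,2)]
    and minus = sym_sq_approx_lipschitz[OF assms(1) this(3,4)]
  have "\<bar>(a + b) / 2 - (a' + b') / 2\<bar> \<le> (\<bar>a - a'\<bar> + \<bar>b - b'\<bar>) / 2"
    "\<bar>(a - b) / 2 - (a' - b') / 2\<bar> \<le> (\<bar>a - a'\<bar> + \<bar>b - b'\<bar>) / 2"
    by (auto simp: abs_if field_simps)
  with plus minus show ?thesis unfolding mult_approx_def by (simp add: abs_le_iff)
qed

section \<open>Approximation of monomials\<close>

lemma sum_delta_times: "(\<Sum>m<(K::nat). (if m = c then a else 0) * h m) = (if c < K then a * h c else (0::real))"
  by (simp add: if_distrib[where f = "\<lambda>t. t * _"] sum.delta cong: if_cong)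

text \<open>Since \<open>relu (t + 1) - 1 = t\<close> for \<open>t \<ge> -1\<close>, this carries values in \<open>[-1, 1]\<close> unchanged
  through ReLU layers.\<close>

definition pass_through :: "nat \<Rightarrow> (nat \<Rightarrow> real) \<Rightarrow> (nat \<Rightarrow> real)" where
  "pass_through K z = (\<lambda>i. if i < K then max (z i) (-1) else 0)"

lemma realizable_pass_through:
  assumes "1 \<le> l"
  shows "realizable K K l (pass_through K)"
proof -
  define I :: "nat \<Rightarrow> nat \<Rightarrow> real" where "I = (\<lambda>i j. if i < K \<and> j = i then 1 else 0)"
  have "pass_through K z = affine_map I (\<lambda>i. if i < K then -1 else 0) K
      (\<lambda>i. relu (affine_map I (\<lambda>i. if i < K then 1 else 0) K z i))" for z
    by (rule ext) (auto simp: pass_through_def affine_map_def I_def relu_def sum_delta_times max_def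
        cong: if_cong)
  then have one_layer: "realizable K K 1 (pass_through K)"
    by (intro realizable_one_layer) auto
  have idem: "pass_through K (pass_through K z) = pass_through K z" for z
    by (auto simp: pass_through_def)
  from assms show ?thesis
  proof (induction l rule: dec_induct)
    case (step l)
    then show ?case using realizable_comp[OF step.IH one_layer] idem by simp
  qed (rule one_layer)
qed

definition polar_matrix :: "nat \<Rightarrow> real \<Rightarrow> nat \<Rightarrow> nat \<Rightarrow> real" where
  "polar_matrix j \<sigma> = (\<lambda>i m. if i < 2 then (if m = 0 then 1 / 4 else 0) + (if m = j + 1 then \<sigma> / 4 else 0) else 0)"

definition polar_bias :: "nat \<Rightarrow> real" where
  "polar_bias = (\<lambda>i. if i < 2 then 1 / 2 else 0)"

text \<open>The hidden outputs of a block are \<open>(s\<^sub>+, q\<^sub>+, s\<^sub>-, q\<^sub>-, z\<^sub>0, \<dots>, z\<^sub>k)\<close>, where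
  \<open>q\<^sub>\<plusminus>\<close> approximate the squares of \<open>((z\<^sub>0 \<plusminus> z\<^sub>j\<^sub>+\<^sub>1) / 2 + 1) / 2\<close> and \<open>s\<^sub>\<plusminus>\<close> are the
  sawtooth values used along the way.\<close>

definition mult_block_output :: "nat \<Rightarrow> nat \<Rightarrow> nat \<Rightarrow> nat \<Rightarrow> real" where
  "mult_block_output k j = (\<lambda>i m.
     if i = 0 then (if m = 1 then 4 else 0) + (if m = 3 then -4 else 0) + (if m = j + 5 then -2 else 0)
     else if i \<le> k then (if m = i + 4 then 1 else 0) else 0)"

definition mult_block :: "nat \<Rightarrow> nat \<Rightarrow> nat \<Rightarrow> nat \<Rightarrow> (nat \<Rightarrow> real) \<Rightarrow> (nat \<Rightarrow> real)" where
  "mult_block n L k j z = affine_map (mult_block_output k j) (\<lambda>_. 0) (k + 5)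
     (vconcat 2 (sq_iter n L (affine_map (polar_matrix j 1) polar_bias (k + 1) z))
       (vconcat 2 (sq_iter n L (affine_map (polar_matrix j (-1)) polar_bias (k + 1) z))
         (pass_through (k + 1) z)))"

lemma realizable_mult_block:
  assumes "1 \<le> n" "1 \<le> L"
  shows "realizable (k + 1) (2 * n + k + 3) L (mult_block n L k j)"
proof -
  have "realizable (k + 1) (n + 1) L (\<lambda>z. sq_iter n L (affine_map (polar_matrix j \<sigma>) polar_bias (k + 1) z))"
    for \<sigma>
    using realizable_comp[OF realizable_affine[of "k + 1" "n + 1"] realizable_sq_iter[OF assms]] assms(2)
    by simp
  then have hidden: "realizable (k + 1) ((n + 1) + ((n + 1) + (k + 1))) L
      (\<lambda>z. vconcat 2 (sq_iter n L (affine_map (polar_matrix j 1) polar_bias (k + 1) z))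
        (vconcat 2 (sq_iter n L (affine_map (polar_matrix j (-1)) polar_bias (k + 1) z))
          (pass_through (k + 1) z)))"
    by (intro realizable_vconcat realizable_pass_through assms)
  have width: "(n + 1) + ((n + 1) + (k + 1)) = 2 * n + k + 3" by simp
  show ?thesis
    using realizable_affine_comp[OF hidden[unfolded width]] unfolding mult_block_def .
qed

lemma mult_block_carry:
  assumes "1 \<le> i" "i \<le> k" "-1 \<le> z i"
  shows "mult_block n L k j z i = z i"
  using assms by (simp add: mult_block_def mult_block_output_def affine_map_def sum_delta_times
      vconcat_def pass_through_def cong: if_cong)

lemma mult_block_product:
  assumes "1 \<le> n" "j < k" "\<bar>z 0\<bar> \<le> 1" "\<bar>z (j + 1)\<bar> \<le> 1"
  shows "mult_block n L k j z 0 = mult_approx (n ^ L) (z 0) (z (j + 1))"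
proof -
  define w where "w = (\<lambda>\<sigma>. ((z 0 + \<sigma> * z (j + 1)) / 2 + 1) / 2)"
  define q where "q = (\<lambda>\<sigma>. sq_iter n L (affine_map (polar_matrix j \<sigma>) polar_bias (k + 1) z))"
  have q: "q \<sigma> 1 = sq_approx (n ^ L) (w \<sigma>)" if "\<bar>\<sigma>\<bar> = 1" for \<sigma>
    unfolding q_def
  proof (rule conjunct2[OF sq_iter_values[OF assms(1)]])
    have "\<bar>\<sigma> * z (j + 1)\<bar> \<le> 1" using assms that by (simp add: abs_mult)
    then have "-1 \<le> \<sigma> * z (j + 1)" "\<sigma> * z (j + 1) \<le> 1" "-1 \<le> z 0" "z 0 \<le> 1"
      using assms(3) by (simp_all add: abs_le_iff)
    then show "0 \<le> w \<sigma>" "w \<sigma> \<le> 1" by (simp_all add: w_def field_simps)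
    have "affine_map (polar_matrix j \<sigma>) polar_bias (k + 1) z i = z 0 / 4 + \<sigma> / 4 * z (j + 1) + 1 / 2"
      if "i < 2" for i
      using that assms(2) by (simp add: affine_map_def polar_matrix_def polar_bias_def distrib_right
          sum.distrib sum_delta_times del: sum.lessThan_Suc)
    then show "affine_map (polar_matrix j \<sigma>) polar_bias (k + 1) z 0 = w \<sigma>"
      "affine_map (polar_matrix j \<sigma>) polar_bias (k + 1) z 1 = w \<sigma>"
      by (simp_all add: w_def field_simps)
  qed
  define H where "H = vconcat 2 (q 1) (vconcat 2 (q (-1)) (pass_through (k + 1) z))"
  have "mult_block n L k j z = affine_map (mult_block_output k j) (\<lambda>_. 0) (k + 5) H"
    by (simp add: mult_block_def H_def q_def)
  then have "mult_block n L k j z 0 = 4 * H 1 - 4 * H 3 - 2 * H (j + 5)"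
    using assms(2) by (simp add: mult_block_output_def affine_map_def distrib_right sum.distrib
        sum_delta_times del: sum.lessThan_Suc)
  moreover have "H 1 = sq_approx (n ^ L) (w 1)" "H 3 = sq_approx (n ^ L) (w (-1))" "H (j + 5) = z (j + 1)"
    using q[of 1] q[of "-1"] assms(2,4) by (simp_all add: H_def vconcat_def pass_through_def)
  ultimately show ?thesis by (simp add: mult_approx_eq_sq_approx w_def)
qed

text \<open>The state of the product network is \<open>(z\<^sub>0, z\<^sub>1, \<dots>, z\<^sub>k)\<close> with the running product in
  \<open>z\<^sub>0\<close> and the factor \<open>x (v (i - 1))\<close> carried in \<open>z\<^sub>i\<close>.\<close>

definition gather_matrix :: "(nat \<Rightarrow> nat) \<Rightarrow> nat \<Rightarrow> nat \<Rightarrow> nat \<Rightarrow> real" where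
  "gather_matrix v k = (\<lambda>i m.
     if i = 0 then (if m = v 0 then 1 else 0)
     else if i \<le> k then (if m = v (i - 1) then 1 else 0) else 0)"

context
  fixes n L k d :: nat and v :: "nat \<Rightarrow> nat"
begin

fun product_net :: "nat \<Rightarrow> (nat \<Rightarrow> real) \<Rightarrow> (nat \<Rightarrow> real)" where
  "product_net 0 x = affine_map (gather_matrix v k) (\<lambda>_. 0) d x"
| "product_net (Suc j) x = mult_block n L k (Suc j) (product_net j x)"

lemma realizable_product_net:
  assumes "1 \<le> n" "1 \<le> L"
  shows "realizable d (2 * n + k + 3) (j * L) (product_net j)"
proof (induction j)
  case 0
  have "product_net 0 = affine_map (gather_matrix v k) (\<lambda>_. 0) d" by (rule ext) simp
  then show ?case using realizable_affine by simp
next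
  case (Suc j)
  from realizable_comp[OF Suc realizable_mult_block[OF assms, of k "Suc j"]] assms(2)
  have "realizable d (2 * n + k + 3) (j * L + L) (\<lambda>x. mult_block n L k (Suc j) (product_net j x))"
    by simp
  moreover have "(\<lambda>x. mult_block n L k (Suc j) (product_net j x)) = product_net (Suc j)" by (rule ext) simp
  ultimately show ?case by (simp add: add.commute)
qed

context
  assumes n: "1 \<le> n" and v: "\<forall>m<k. v m < d"
begin

lemma product_net_factors:
  assumes x: "\<forall>i<d. \<bar>x i\<bar> \<le> 1" and "1 \<le> i" "i \<le> k"
  shows "product_net j x i = x (v (i - 1))"
proof (induction j)
  case 0
  have "v (i - 1) < d" using v assms by simp
  then show ?case using assms by (simp add: affine_map_def gather_matrix_def sum_delta_times)
next
  case (Suc j)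
  have "-1 \<le> x (v (i - 1))" using x v assms by (simp add: abs_le_iff)
  then show ?case using Suc assms by (simp add: mult_block_carry)
qed

lemma product_net_0:
  assumes "1 \<le> k"
  shows "product_net 0 x 0 = x (v 0)"
proof -
  have "v 0 < d" using v assms by simp
  then show ?thesis by (simp add: affine_map_def gather_matrix_def sum_delta_times)
qed

lemma product_net_Suc:
  assumes x: "\<forall>i<d. \<bar>x i\<bar> \<le> 1" and "Suc j < k" "\<bar>product_net j x 0\<bar> \<le> 1"
  shows "product_net (Suc j) x 0 = mult_approx (n ^ L) (product_net j x 0) (x (v (Suc j)))"
proof -
  have "product_net j x (Suc j + 1) = x (v (Suc j))"
    using product_net_factors[OF x, of "Suc j + 1"] assms(2) by simp
  moreover have "\<bar>x (v (Suc j))\<bar> \<le> 1" using x v assms(2) by simp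
  ultimately show ?thesis using mult_block_product[where j = "Suc j" and z = "product_net j x", OF n assms(2,3)] by simp
qed

lemma product_net_bounded:
  assumes x: "\<forall>i<d. \<bar>x i\<bar> \<le> 1" and "j < k"
  shows "\<bar>product_net j x 0\<bar> \<le> 1"
  using \<open>j < k\<close>
proof (induction j)
  case 0
  then show ?case using x v by (simp add: product_net_0 del: product_net.simps)
next
  case (Suc j)
  then have p: "\<bar>product_net j x 0\<bar> \<le> 1" by simp
  have "1 \<le> n ^ L" "\<bar>x (v (Suc j))\<bar> \<le> 1" using n x v Suc.prems by simp_all
  with mult_approx_bounds(1) p show ?case unfolding product_net_Suc[OF x Suc.prems p] by blast
qed

lemma product_net_error:
  assumes x: "\<forall>i<d. \<bar>x i\<bar> \<le> 1" and "j < k"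
  shows "\<bar>product_net j x 0 - (\<Prod>m\<le>j. x (v m))\<bar> \<le> real j * (2 / real (n ^ L) ^ 2)"
  using \<open>j < k\<close>
proof (induction j)
  case 0
  then show ?case by (simp add: product_net_0 del: product_net.simps)
next
  case (Suc j)
  define p where "p = product_net j x 0"
  define P where "P = (\<Prod>m\<le>j. x (v m))"
  define c where "c = x (v (Suc j))"
  have p: "\<bar>p\<bar> \<le> 1" unfolding p_def using product_net_bounded[OF x] Suc.prems by simp
  have c: "\<bar>c\<bar> \<le> 1" unfolding c_def using x v Suc.prems by simp
  have "mult_approx (n ^ L) p c - P * c = (mult_approx (n ^ L) p c - p * c) + (p - P) * c"
    by (simp add: algebra_simps)
  then have "\<bar>mult_approx (n ^ L) p c - P * c\<bar> \<le> \<bar>mult_approx (n ^ L) p c - p * c\<bar> + \<bar>p - P\<bar> * \<bar>c\<bar>"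
    by (metis abs_mult abs_triangle_ineq)
  also have "\<dots> \<le> 2 / real (n ^ L) ^ 2 + real j * (2 / real (n ^ L) ^ 2)"
  proof (rule add_mono)
    show "\<bar>mult_approx (n ^ L) p c - p * c\<bar> \<le> 2 / real (n ^ L) ^ 2"
      by (rule mult_approx_bounds(2)[OF one_le_power[OF n] p c])
    have "\<bar>p - P\<bar> * \<bar>c\<bar> \<le> \<bar>p - P\<bar>" using c by (simp add: mult_right_le_one_le)
    then show "\<bar>p - P\<bar> * \<bar>c\<bar> \<le> real j * (2 / real (n ^ L) ^ 2)"
      using Suc by (simp add: p_def P_def)
  qed
  also have "\<dots> = real (Suc j) * (2 / real (n ^ L) ^ 2)" by (simp add: distrib_right add_divide_distrib)
  finally show ?case
    using product_net_Suc[OF x Suc.prems p[unfolded p_def]] by (simp add: p_def P_def c_def mult.commute)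
qed

lemma product_net_lipschitz:
  assumes x: "\<forall>i<d. \<bar>x i\<bar> \<le> 1" and y: "\<forall>i<d. \<bar>y i\<bar> \<le> 1" and "j < k"
  shows "\<bar>product_net j x 0 - product_net j y 0\<bar> \<le> 4 ^ j * (\<Sum>m\<le>j. \<bar>x (v m) - y (v m)\<bar>)"
  using \<open>j < k\<close>
proof (induction j)
  case 0
  then show ?case by (simp add: product_net_0 del: product_net.simps)
next
  case (Suc j)
  define D where "D = (\<Sum>m\<le>j. \<bar>x (v m) - y (v m)\<bar>)"
  define e where "e = \<bar>x (v (Suc j)) - y (v (Suc j))\<bar>"
  have "1 \<le> n ^ L" using n by simp
  have bounded: "\<bar>product_net j x 0\<bar> \<le> 1" "\<bar>product_net j y 0\<bar> \<le> 1"
    "\<bar>x (v (Suc j))\<bar> \<le> 1" "\<bar>y (v (Suc j))\<bar> \<le> 1"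
    using product_net_bounded[OF x] product_net_bounded[OF y] x y v Suc.prems by simp_all
  have "\<bar>product_net (Suc j) x 0 - product_net (Suc j) y 0\<bar>
      \<le> 4 * (\<bar>product_net j x 0 - product_net j y 0\<bar> + e)"
    unfolding product_net_Suc[OF x Suc.prems bounded(1)] product_net_Suc[OF y Suc.prems bounded(2)] e_def
    by (rule mult_approx_lipschitz[OF \<open>1 \<le> n ^ L\<close> bounded(1,3,2,4)])
  also have "\<dots> \<le> 4 * (4 ^ j * D + 4 ^ j * e)"
  proof -
    have "e \<le> 4 ^ j * e" using mult_right_mono[of 1 "4 ^ j :: real" e] by (simp add: e_def)
    then show ?thesis using Suc by (simp add: D_def)
  qed
  also have "\<dots> = 4 ^ Suc j * (\<Sum>m\<le>Suc j. \<bar>x (v m) - y (v m)\<bar>)"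
    by (simp add: D_def e_def algebra_simps)
  finally show ?case .
qed

end

end

definition multiindex_list :: "(nat \<Rightarrow> nat) \<Rightarrow> nat \<Rightarrow> nat list" where
  "multiindex_list \<alpha> d = concat (map (\<lambda>i. replicate (\<alpha> i) i) [0..<d])"

lemma length_multiindex_list: "length (multiindex_list \<alpha> d) = (\<Sum>i<d. \<alpha> i)"
  unfolding multiindex_list_def by (induction d) auto

lemma multiindex_list_nth_less:
  assumes "m < (\<Sum>i<d. \<alpha> i)"
  shows "multiindex_list \<alpha> d ! m < d"
proof -
  have "multiindex_list \<alpha> d ! m \<in> set (multiindex_list \<alpha> d)"
    using assms by (simp add: length_multiindex_list)
  then show ?thesis by (auto simp: multiindex_list_def)
qed

lemma prod_multiindex_list:
  "(\<Prod>m<(\<Sum>i<d. \<alpha> i). x (multiindex_list \<alpha> d ! m)) = (\<Prod>i<d. (x i :: real) ^ \<alpha> i)"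
proof -
  have "prod_list (map x (multiindex_list \<alpha> d)) = (\<Prod>i<d. x i ^ \<alpha> i)"
    unfolding multiindex_list_def by (induction d) (auto simp: map_concat)
  then show ?thesis by (simp add: prod.list_conv_set_nth length_multiindex_list atLeast0LessThan)
qed

lemma sum_multiindex_list:
  "(\<Sum>m<(\<Sum>i<d. \<alpha> i). f (multiindex_list \<alpha> d ! m)) = (\<Sum>i<d. real (\<alpha> i) * f i)"
proof -
  have "sum_list (map f (multiindex_list \<alpha> d)) = (\<Sum>i<d. real (\<alpha> i) * f i)"
    unfolding multiindex_list_def by (induction d) (auto simp: map_concat sum_list_replicate)
  then show ?thesis by (simp add: sum_list_sum_nth length_multiindex_list atLeast0LessThan)
qed

definition monomial_net :: "nat \<Rightarrow> nat \<Rightarrow> (nat \<Rightarrow> nat) \<Rightarrow> nat \<Rightarrow> (nat \<Rightarrow> real) \<Rightarrow> real" where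
  "monomial_net n L \<alpha> d x =
     product_net n L (\<Sum>i<d. \<alpha> i) d ((!) (multiindex_list \<alpha> d)) ((\<Sum>i<d. \<alpha> i) - 1) x 0"

lemma monomial_net_NN:
  assumes "1 \<le> n" "1 \<le> L" "k = (\<Sum>i<d. \<alpha> i)" "2 * n + k + 3 \<le> W'" "(k - 1) * L \<le> L'"
  shows "monomial_net n L \<alpha> d \<in> NN d W' L'"
  using realizable_NN[OF realizable_product_net[OF assms(1,2)] assms(5,4)] assms(3)
  by (simp add: monomial_net_def[abs_def])

lemma monomial_net_approx:
  assumes n: "1 \<le> n" and k: "k = (\<Sum>i<d. \<alpha> i)" "1 \<le> k"
    and x: "\<forall>i<d. \<bar>x i\<bar> \<le> 1" and y: "\<forall>i<d. \<bar>y i\<bar> \<le> 1"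
  shows "\<bar>monomial_net n L \<alpha> d x\<bar> \<le> 1"
    and "\<bar>monomial_net n L \<alpha> d x - (\<Prod>i<d. x i ^ \<alpha> i)\<bar> \<le> real (k - 1) * (2 / real (n ^ L) ^ 2)"
    and "\<bar>monomial_net n L \<alpha> d x - monomial_net n L \<alpha> d y\<bar>
      \<le> 4 ^ (k - 1) * (\<Sum>i<d. real (\<alpha> i) * \<bar>x i - y i\<bar>)"
proof -
  define v where "v = (!) (multiindex_list \<alpha> d)"
  have net: "monomial_net n L \<alpha> d = (\<lambda>x. product_net n L k d v (k - 1) x 0)"
    by (simp add: monomial_net_def fun_eq_iff k v_def)
  have v: "\<forall>m<k. v m < d" using k multiindex_list_nth_less by (simp add: v_def)
  have last: "k - 1 < k" "{..k - 1} = {..<k}" using k by auto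
  show "\<bar>monomial_net n L \<alpha> d x\<bar> \<le> 1"
    unfolding net using product_net_bounded[OF n v x last(1)] .
  have "(\<Prod>m<k. x (v m)) = (\<Prod>i<d. x i ^ \<alpha> i)"
    using prod_multiindex_list k by (simp add: v_def)
  then show "\<bar>monomial_net n L \<alpha> d x - (\<Prod>i<d. x i ^ \<alpha> i)\<bar> \<le> real (k - 1) * (2 / real (n ^ L) ^ 2)"
    using product_net_error[OF n v x last(1)] unfolding net last(2) by simp
  have "(\<Sum>m<k. \<bar>x (v m) - y (v m)\<bar>) = (\<Sum>i<d. real (\<alpha> i) * \<bar>x i - y i\<bar>)"
    using sum_multiindex_list k by (simp add: v_def)
  then show "\<bar>monomial_net n L \<alpha> d x - monomial_net n L \<alpha> d y\<bar>
      \<le> 4 ^ (k - 1) * (\<Sum>i<d. real (\<alpha> i) * \<bar>x i - y i\<bar>)"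
    using product_net_lipschitz[OF n v x y last(1)] unfolding net last(2) by simp
qed

lemma sum_weighted_le_Max:
  fixes \<alpha> :: "nat \<Rightarrow> nat" and a :: "nat \<Rightarrow> real"
  assumes "\<And>i. i < d \<Longrightarrow> 0 \<le> a i"
  shows "(\<Sum>i<d. real (\<alpha> i) * a i) \<le> real (Max (\<alpha> ` {..<d})) * (\<Sum>i<d. a i)"
proof -
  have "\<alpha> i \<le> Max (\<alpha> ` {..<d})" if "i < d" for i by (rule Max_ge) (use that in auto)
  then show ?thesis unfolding sum_distrib_left using assms by (intro sum_mono mult_right_mono) auto
qed

lemma product_error_le:
  assumes "1 \<le> W"
  shows "real j * (2 / real (W ^ L) ^ 2) \<le> 6 * real j / real W ^ L"
proof -
  have "real W ^ L \<le> (real W ^ L)\<^sup>2" using assms by (simp add: power2_eq_square)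
  then have "2 / real (W ^ L) ^ 2 \<le> 6 / real W ^ L"
    using assms by (intro frac_le) auto
  then have "real j * (2 / real (W ^ L) ^ 2) \<le> real j * (6 / real W ^ L)"
    by (rule mult_left_mono) simp
  then show ?thesis by (simp add: mult.commute)
qed

theorem corollary33:
  fixes d :: nat and \<alpha> :: "nat \<Rightarrow> nat" and k W L :: nat
  assumes "k = (\<Sum>i<d. \<alpha> i)" and "k \<ge> 2"
    and "W \<ge> 1" and "L \<ge> 1"
  shows "\<exists>\<phi>\<in>NN d (9 * W + k - 1) ((k - 1) * (L + 1)).
    \<forall>x y. (\<forall>i<d. \<bar>x i\<bar> \<le> 1) \<longrightarrow> (\<forall>i<d. \<bar>y i\<bar> \<le> 1) \<longrightarrow>
      \<bar>\<phi> x\<bar> \<le> 1 \<and>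
      \<bar>\<phi> x - (\<Prod>i<d. x i ^ \<alpha> i)\<bar> \<le> 6 * real (k - 1) / real W ^ L \<and>
      \<bar>\<phi> x - \<phi> y\<bar> \<le> 7 ^ (k - 1) * real (Max (\<alpha> ` {..<d})) * (\<Sum>i<d. \<bar>x i - y i\<bar>)"
proof (intro bexI[of _ "monomial_net W L \<alpha> d"] allI impI conjI)
  fix x y :: "nat \<Rightarrow> real"
  assume x: "\<forall>i<d. \<bar>x i\<bar> \<le> 1" and y: "\<forall>i<d. \<bar>y i\<bar> \<le> 1"
  have "1 \<le> k" using assms(2) by simp
  note net = monomial_net_approx[OF \<open>W \<ge> 1\<close> assms(1) this x y, where L = L]
  show "\<bar>monomial_net W L \<alpha> d x\<bar> \<le> 1" by (rule net(1))
  show "\<bar>monomial_net W L \<alpha> d x - (\<Prod>i<d. x i ^ \<alpha> i)\<bar> \<le> 6 * real (k - 1) / real W ^ L"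
    using net(2) product_error_le[OF \<open>W \<ge> 1\<close>, of "k - 1" L] by linarith
  have "4 ^ (k - 1) * (\<Sum>i<d. real (\<alpha> i) * \<bar>x i - y i\<bar>)
      \<le> 7 ^ (k - 1) * (real (Max (\<alpha> ` {..<d})) * (\<Sum>i<d. \<bar>x i - y i\<bar>))"
    by (intro mult_mono power_mono sum_weighted_le_Max) (auto intro: sum_nonneg)
  with net(3) show "\<bar>monomial_net W L \<alpha> d x - monomial_net W L \<alpha> d y\<bar>
      \<le> 7 ^ (k - 1) * real (Max (\<alpha> ` {..<d})) * (\<Sum>i<d. \<bar>x i - y i\<bar>)"
    by (simp add: mult.assoc)
next
  show "monomial_net W L \<alpha> d \<in> NN d (9 * W + k - 1) ((k - 1) * (L + 1))"
    using assms by (intro monomial_net_NN) auto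
qed

end
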